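(* Let $(X,d)$ be a metric space and let $\mathcal{B}$ be a bornology on $X$ with a closed base $\mathcal{B}_0$. Let $\tau_F$ and $\tau_F^s$ be the finest locally convex topologies of the extended locally convex spaces $(C(X),\tau_{\mathcal{B}})$ and $(C(X),\tau_{\mathcal{B}}^s)$, respectively. Then the following are equivalent: (i) $\tau_F=\tau_F^s$; (ii) $\tau_{\mathcal{B}}=\tau_{\mathcal{B}}^s$; (iii) $\mathcal{B}$ is shielded from closed sets.
   Context: $C(X)$ is the vector space of continuous real-valued functions on $(X,d)$. A bornology on $X$ is a family of nonempty subsets of $X$ covering $X$, closed under finite unions and under taking nonempty subsets; a base $\mathcal{B}_0$ is a subfamily cofinal under inclusion, and it is a closed base if its members are closed. $\tau_{\mathcal{B}}$ (uniform convergence on $\mathcal{B}$) is the topology on $C(X)$ induced by the extended seminorms $\rho_B(f)=\sup_{x\in B}|f(x)|$, $B\in\mathcal{B}_0$; $\tau_{\mathcal{B}}^s$ (strong uniform convergence on $\mathcal{B}$) is induced by the extended seminorms $\rho^s_B(f)=\inf_{\delta>0}\sup_{x\in B^\delta}|f(x)|$, $B\in\mathcal{B}_0$, where $B^\delta=\{x\in X: d(x,B)<\delta\}$. (A topology induced by a family $\{\rho_i\}$ of extended seminorms $\rho:V\to[0,\infty]$, i.e. absolutely homogeneous and subadditive maps, has as neighborhood base at $v_0$ the sets $\{v:\max_{i\in J}\rho_i(v-v_0)<\varepsilon\}$, $J$ finite; such a space is an extended locally convex space.) The finest locally convex topology of an extended locally convex space $(V,\tau)$ is the locally convex topology $\tau_F\subseteq\tau$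 (induced by finite-valued seminorms) such that every locally convex topology $\sigma\subseteq\tau$ on $V$ satisfies $\sigma\subseteq\tau_F$. For nonempty $A\subseteq X$, a superset $A_1\supseteq A$ is a shield for $A$ if for every closed $C\subseteq X$ with $C\cap A_1=\emptyset$ there is $\delta>0$ with $C\cap A^\delta=\emptyset$. $\mathcal{B}$ is shielded from closed sets if each $B\in\mathcal{B}$ has a shield belonging to $\mathcal{B}$. *)

theory Defs
  imports "HOL-Analysis.Analysis"
begin

text \<open>The metric space (X,d) is the whole of a type of class metric_space;
 C(X) is the set of continuous real-valued functions on it.\<close>

definition CX :: "('a::metric_space \<Rightarrow> real) set" where
  "CX = {f. continuous_on UNIV f}"

definition bornology :: "'a set set \<Rightarrow> bool" where
  "bornology \<B> \<longleftrightarrow> (\<forall>B\<in>\<B>. B \<noteq> {}) \<and> \<Union>\<B> = UNIV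
     \<and> (\<forall>A\<in>\<B>. \<forall>B\<in>\<B>. A \<union> B \<in> \<B>)
     \<and> (\<forall>B\<in>\<B>. \<forall>A. A \<subseteq> B \<and> A \<noteq> {} \<longrightarrow> A \<in> \<B>)"

definition bornology_base :: "'a set set \<Rightarrow> 'a set set \<Rightarrow> bool" where
  "bornology_base \<B> \<B>0 \<longleftrightarrow> \<B>0 \<subseteq> \<B> \<and> (\<forall>B\<in>\<B>. \<exists>B0\<in>\<B>0. B \<subseteq> B0)"

definition closed_bornology_base :: "'a::topological_space set set \<Rightarrow> 'a set set \<Rightarrow> bool" where
  "closed_bornology_base \<B> \<B>0 \<longleftrightarrow> bornology_base \<B> \<B>0 \<and> (\<forall>B\<in>\<B>0. closed B)"

definition enlarge :: "'a::metric_space set \<Rightarrow> real \<Rightarrow> 'a set" where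
  "enlarge B \<delta> = {x. infdist x B < \<delta>}"

definition seminorm_topology ::
  "('a \<Rightarrow> real) set \<Rightarrow> ('i \<Rightarrow> ('a \<Rightarrow> real) \<Rightarrow> ereal) \<Rightarrow> 'i set \<Rightarrow> ('a \<Rightarrow> real) topology" where
  "seminorm_topology V \<rho> I = topology (\<lambda>U. U \<subseteq> V \<and>
     (\<forall>v0\<in>U. \<exists>J \<epsilon>. finite J \<and> J \<subseteq> I \<and> \<epsilon> > 0 \<and>
        {v\<in>V. \<forall>i\<in>J. \<rho> i (\<lambda>x. v x - v0 x) < ereal \<epsilon>} \<subseteq> U))"

definition rho_B :: "'a set \<Rightarrow> ('a \<Rightarrow> real) \<Rightarrow> ereal" where
  "rho_B B f = (SUP x\<in>B. ereal \<bar>f x\<bar>)"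

definition rho_sB :: "'a::metric_space set \<Rightarrow> ('a \<Rightarrow> real) \<Rightarrow> ereal" where
  "rho_sB B f = (INF \<delta>\<in>{0<..}. SUP x\<in>enlarge B \<delta>. ereal \<bar>f x\<bar>)"

definition tau_B :: "'a::metric_space set set \<Rightarrow> ('a \<Rightarrow> real) topology" where
  "tau_B \<B>0 = seminorm_topology CX rho_B \<B>0"

definition tau_sB :: "'a::metric_space set set \<Rightarrow> ('a \<Rightarrow> real) topology" where
  "tau_sB \<B>0 = seminorm_topology CX rho_sB \<B>0"

definition seminorm_on :: "('a \<Rightarrow> real) set \<Rightarrow> (('a \<Rightarrow> real) \<Rightarrow> real) \<Rightarrow> bool" where
  "seminorm_on V p \<longleftrightarrow> (\<forall>v\<in>V. p v \<ge> 0)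
     \<and> (\<forall>v\<in>V. \<forall>c::real. p (\<lambda>x. c * v x) = \<bar>c\<bar> * p v)
     \<and> (\<forall>u\<in>V. \<forall>v\<in>V. p (\<lambda>x. u x + v x) \<le> p u + p v)"

definition locally_convex_topology :: "('a \<Rightarrow> real) set \<Rightarrow> ('a \<Rightarrow> real) topology \<Rightarrow> bool" where
  "locally_convex_topology V \<sigma> \<longleftrightarrow>
     (\<exists>P. (\<forall>p\<in>P. seminorm_on V p) \<and> \<sigma> = seminorm_topology V (\<lambda>p v. ereal (p v)) P)"

definition coarser :: "'b topology \<Rightarrow> 'b topology \<Rightarrow> bool" where
  "coarser \<sigma> \<tau> \<longleftrightarrow> (\<forall>U. openin \<sigma> U \<longrightarrow> openin \<tau> U)"

definition finest_lc_topology ::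
  "('a \<Rightarrow> real) set \<Rightarrow> ('a \<Rightarrow> real) topology \<Rightarrow> ('a \<Rightarrow> real) topology \<Rightarrow> bool" where
  "finest_lc_topology V \<tau> T \<longleftrightarrow> locally_convex_topology V T \<and> coarser T \<tau>
     \<and> (\<forall>\<sigma>. locally_convex_topology V \<sigma> \<and> coarser \<sigma> \<tau> \<longrightarrow> coarser \<sigma> T)"

definition shield :: "'a::metric_space set \<Rightarrow> 'a set \<Rightarrow> bool" where
  "shield A A1 \<longleftrightarrow> A \<subseteq> A1 \<and>
     (\<forall>C. closed C \<and> C \<inter> A1 = {} \<longrightarrow> (\<exists>\<delta>>0. C \<inter> enlarge A \<delta> = {}))"

definition shielded_from_closed_sets :: "'a::metric_space set set \<Rightarrow> bool" where
  "shielded_from_closed_sets \<B> \<longleftrightarrow> (\<forall>B\<in>\<B>. \<exists>A1\<in>\<B>. shield B A1)"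

end

theory Submission
  imports Defs "HOL-Library.Function_Algebras"
begin

(* Since rho_B B <= rho^s_B B, tau_B is always coarser than tau^s_B. A shield A1 of B gives
   rho^s_B B f <= rho_B A1 f for continuous f, because {x. t <= |f x|} is a closed set missing A1
   and hence some B^delta. So (iii) implies (ii), and (ii) implies (i) because a finest locally
   convex topology is unique.

   For (i) ==> (iii) take a base set B without a shield. For every finite union A1 of base sets
   containing B there is a closed set missing A1 but meeting every B^delta, and an Urysohn function
   for these two sets is small for tau_B but has rho^s_B B f = 1. Composing rho^s_B B with a linear
   projection onto the subspace where it is finite (a Hamel basis argument) gives a finite seminorm
   p <= rho^s_B B. It generates a locally convex topology coarser than tau^s_B, hence than
   tau_F^s = tau_F, which is coarser than tau_B; yet its unit ball is no tau_B-neighbourhood of 0. *)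

lemma openin_seminorm_topology:
  "openin (seminorm_topology V \<rho> I) U \<longleftrightarrow> U \<subseteq> V \<and>
     (\<forall>v0\<in>U. \<exists>J \<epsilon>. finite J \<and> J \<subseteq> I \<and> \<epsilon> > 0 \<and>
        {v\<in>V. \<forall>i\<in>J. \<rho> i (\<lambda>x. v x - v0 x) < ereal \<epsilon>} \<subseteq> U)"
proof -
  let ?nbhd = "\<lambda>J \<epsilon> v0. {v\<in>V. \<forall>i\<in>J. \<rho> i (\<lambda>x. v x - v0 x) < ereal \<epsilon>}"
  let ?open = "\<lambda>U. U \<subseteq> V \<and> (\<forall>v0\<in>U. \<exists>J \<epsilon>. finite J \<and> J \<subseteq> I \<and> \<epsilon> > 0 \<and> ?nbhd J \<epsilon> v0 \<subseteq> U)"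
  have "?open (S \<inter> T)" if S: "?open S" and T: "?open T" for S T
  proof (intro conjI ballI)
    show "S \<inter> T \<subseteq> V" using S by auto
    fix v0 assume "v0 \<in> S \<inter> T"
    then obtain J1 \<epsilon>1 J2 \<epsilon>2
      where J1: "finite J1" "J1 \<subseteq> I" "\<epsilon>1 > 0" and S1: "?nbhd J1 \<epsilon>1 v0 \<subseteq> S"
        and J2: "finite J2" "J2 \<subseteq> I" "\<epsilon>2 > 0" and T2: "?nbhd J2 \<epsilon>2 v0 \<subseteq> T"
      using S T by (meson IntD1 IntD2)
    have "?nbhd (J1 \<union> J2) (min \<epsilon>1 \<epsilon>2) v0 \<subseteq> ?nbhd J1 \<epsilon>1 v0 \<inter> ?nbhd J2 \<epsilon>2 v0"
      by (auto elim: less_le_trans)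
    with S1 T2 have "?nbhd (J1 \<union> J2) (min \<epsilon>1 \<epsilon>2) v0 \<subseteq> S \<inter> T"
      by blast
    with J1 J2 show "\<exists>J \<epsilon>. finite J \<and> J \<subseteq> I \<and> \<epsilon> > 0 \<and> ?nbhd J \<epsilon> v0 \<subseteq> S \<inter> T"
      by (intro exI[of _ "J1 \<union> J2"] exI[of _ "min \<epsilon>1 \<epsilon>2"]) auto
  qed
  moreover have "?open (\<Union>K)" if "\<forall>S\<in>K. ?open S" for K
    using that by (fast elim!: UnionE)
  ultimately have "istopology ?open" unfolding istopology_def by blast
  then show ?thesis unfolding seminorm_topology_def by simp
qed

lemma coarser_seminorm_topology:
  assumes "\<And>i. i \<in> I \<Longrightarrow> \<exists>j\<in>I'. \<forall>u\<in>V. \<forall>v\<in>V. \<rho> i (\<lambda>x. u x - v x) \<le> \<rho>' j (\<lambda>x. u x - v x)"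
  shows "coarser (seminorm_topology V \<rho> I) (seminorm_topology V \<rho>' I')"
  unfolding coarser_def openin_seminorm_topology
proof (intro allI impI conjI ballI)
  fix U v0
  assume U: "U \<subseteq> V \<and> (\<forall>v0\<in>U. \<exists>J \<epsilon>. finite J \<and> J \<subseteq> I \<and> \<epsilon> > 0 \<and>
    {v\<in>V. \<forall>i\<in>J. \<rho> i (\<lambda>x. v x - v0 x) < ereal \<epsilon>} \<subseteq> U)"
  then show "U \<subseteq> V" by blast
  assume "v0 \<in> U"
  with U obtain J \<epsilon> where J: "finite J" "J \<subseteq> I" "\<epsilon> > 0"
    and nbhd: "{v\<in>V. \<forall>i\<in>J. \<rho> i (\<lambda>x. v x - v0 x) < ereal \<epsilon>} \<subseteq> U"
    by blast
  obtain g where g: "\<And>i. i \<in> J \<Longrightarrow> g i \<in> I'"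
    and dominated: "\<And>i u v. i \<in> J \<Longrightarrow> u \<in> V \<Longrightarrow> v \<in> V \<Longrightarrow>
      \<rho> i (\<lambda>x. u x - v x) \<le> \<rho>' (g i) (\<lambda>x. u x - v x)"
    using assms J(2) by (metis subsetD)
  have "{v\<in>V. \<forall>j\<in>g ` J. \<rho>' j (\<lambda>x. v x - v0 x) < ereal \<epsilon>} \<subseteq> U"
    using nbhd dominated \<open>v0 \<in> U\<close> U by (fastforce elim: le_less_trans)
  with J g show "\<exists>J \<epsilon>. finite J \<and> J \<subseteq> I' \<and> \<epsilon> > 0 \<and>
    {v\<in>V. \<forall>i\<in>J. \<rho>' i (\<lambda>x. v x - v0 x) < ereal \<epsilon>} \<subseteq> U"
    by (intro exI[of _ "g ` J"] exI[of _ \<epsilon>]) auto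
qed

lemma openin_seminorm_ball:
  assumes "i \<in> I"
    and triangle: "\<And>u v. u \<in> V \<Longrightarrow> v \<in> V \<Longrightarrow> \<rho> i u \<le> \<rho> i (\<lambda>x. u x - v x) + \<rho> i v"
  shows "openin (seminorm_topology V \<rho> I) {v\<in>V. \<rho> i v < ereal r}"
  unfolding openin_seminorm_topology
proof (intro conjI ballI)
  fix v0 assume v0: "v0 \<in> {v\<in>V. \<rho> i v < ereal r}"
  then obtain s where s: "\<rho> i v0 < ereal s" "ereal s < ereal r"
    using ereal_dense2 by blast
  have "\<rho> i v < ereal r" if "v \<in> V" "\<rho> i (\<lambda>x. v x - v0 x) < ereal (r - s)" for v
  proof -
    have "\<rho> i v < ereal (r - s) + ereal s"
      using triangle[OF \<open>v \<in> V\<close>, of v0] v0 that(2) s(1) by (fastforce intro: ereal_add_strict_mono2 elim: le_less_trans)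
    then show ?thesis by simp
  qed
  with assms(1) s(2) show "\<exists>J \<epsilon>. finite J \<and> J \<subseteq> I \<and> \<epsilon> > 0 \<and>
    {v\<in>V. \<forall>j\<in>J. \<rho> j (\<lambda>x. v x - v0 x) < ereal \<epsilon>} \<subseteq> {v\<in>V. \<rho> i v < ereal r}"
    by (intro exI[of _ "{i}"] exI[of _ "r - s"]) auto
qed auto

lemma coarser_antisym: "coarser \<sigma> \<tau> \<Longrightarrow> coarser \<tau> \<sigma> \<Longrightarrow> \<sigma> = \<tau>"
  unfolding coarser_def topology_eq by blast

lemma finest_lc_topology_unique:
  "finest_lc_topology V \<tau> T \<Longrightarrow> finest_lc_topology V \<tau> T' \<Longrightarrow> T = T'"
  unfolding finest_lc_topology_def by (blast intro: coarser_antisym)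

(* Function types carry no real_vector instance, so the vector space structure of
   'a => real is interpreted directly. *)
definition fun_scaleR :: "real \<Rightarrow> ('a \<Rightarrow> real) \<Rightarrow> 'a \<Rightarrow> real" where
  "fun_scaleR c f = (\<lambda>x. c * f x)"

interpretation fun_vs: vector_space "fun_scaleR :: real \<Rightarrow> ('a \<Rightarrow> real) \<Rightarrow> _"
  by unfold_locales (simp_all add: fun_scaleR_def plus_fun_def algebra_simps)

interpretation fun_vsp: vector_space_pair
  "fun_scaleR :: real \<Rightarrow> ('a \<Rightarrow> real) \<Rightarrow> _" "fun_scaleR :: real \<Rightarrow> ('b \<Rightarrow> real) \<Rightarrow> _" ..

lemma linear_projection_onto_subspace:
  assumes "fun_vs.subspace (F :: ('a \<Rightarrow> real) set)"
  obtains \<pi> where "Vector_Spaces.linear fun_scaleR fun_scaleR \<pi>"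
    and "\<And>v. v \<in> F \<Longrightarrow> \<pi> v = v" and "\<And>v. \<pi> v \<in> F"
proof -
  obtain b where b: "b \<subseteq> F" "fun_vs.independent b" "F \<subseteq> fun_vs.span b"
    by (rule fun_vs.basis_exists)
  have span_b: "fun_vs.span b = F"
    using fun_vs.span_subspace[OF b(1,3) assms] .
  define \<pi> where "\<pi> = fun_vsp.construct b id"
  have linear: "Vector_Spaces.linear fun_scaleR fun_scaleR \<pi>"
    unfolding \<pi>_def by (rule fun_vsp.linear_construct[OF b(2)])
  moreover have "\<pi> v = v" if "v \<in> F" for v
    using fun_vsp.linear_eq_on[OF linear fun_vs.linear_id, of v b] that span_b
    unfolding \<pi>_def by (simp add: fun_vsp.construct_basis[OF b(2)])
  moreover have "range \<pi> = F"
    unfolding \<pi>_def using fun_vsp.range_construct_eq_span[OF b(2), of id] span_b by simp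
  ultimately show ?thesis using that by blast
qed

(* As ereal 0 * \<infinity> = 0, the case c = 0 of homogeneity forces \<rho> 0 = 0. *)
definition extended_seminorm_on :: "('a \<Rightarrow> real) set \<Rightarrow> (('a \<Rightarrow> real) \<Rightarrow> ereal) \<Rightarrow> bool" where
  "extended_seminorm_on V \<rho> \<longleftrightarrow> (\<forall>v\<in>V. \<rho> v \<ge> 0)
     \<and> (\<forall>v\<in>V. \<forall>c::real. \<rho> (\<lambda>x. c * v x) = ereal \<bar>c\<bar> * \<rho> v)
     \<and> (\<forall>u\<in>V. \<forall>v\<in>V. \<rho> (\<lambda>x. u x + v x) \<le> \<rho> u + \<rho> v)"

lemma finite_part_seminorm:
  assumes V: "fun_vs.subspace V" and \<rho>: "extended_seminorm_on V \<rho>"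
  obtains p where "seminorm_on V p" and "\<And>v. v \<in> V \<Longrightarrow> ereal (p v) \<le> \<rho> v"
    and "\<And>v. v \<in> V \<Longrightarrow> \<rho> v < \<infinity> \<Longrightarrow> ereal (p v) = \<rho> v"
proof -
  define F where "F = {v\<in>V. \<rho> v < \<infinity>}"
  have nonneg: "\<And>v. v \<in> V \<Longrightarrow> \<rho> v \<ge> 0"
    and scale: "\<And>v c. v \<in> V \<Longrightarrow> \<rho> (\<lambda>x. c * v x) = ereal \<bar>c\<bar> * \<rho> v"
    and add: "\<And>u v. u \<in> V \<Longrightarrow> v \<in> V \<Longrightarrow> \<rho> (\<lambda>x. u x + v x) \<le> \<rho> u + \<rho> v"
    using \<rho> unfolding extended_seminorm_on_def by blast+
  have V_scale: "\<And>v c. v \<in> V \<Longrightarrow> (\<lambda>x. c * v x) \<in> V"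
    and V_add: "\<And>u v. u \<in> V \<Longrightarrow> v \<in> V \<Longrightarrow> (\<lambda>x. u x + v x) \<in> V"
    using fun_vs.subspace_scale[OF V] fun_vs.subspace_add[OF V]
    by (simp_all add: fun_scaleR_def plus_fun_def)
  have "fun_vs.subspace F"
  proof (rule fun_vs.subspaceI)
    have "\<rho> 0 = ereal 0 * \<rho> 0"
      using scale[OF fun_vs.subspace_0[OF V], of 0] by (simp add: zero_fun_def)
    then show "0 \<in> F"
      using fun_vs.subspace_0[OF V] by (simp add: F_def zero_ereal_def[symmetric])
  next
    fix u v assume "u \<in> F" "v \<in> F"
    then show "u + v \<in> F"
      using add[of u v] V_add[of u v] unfolding F_def plus_fun_def
      by (cases "\<rho> u"; cases "\<rho> v") auto
  next
    fix c v assume "v \<in> F"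
    then show "fun_scaleR c v \<in> F"
      using scale[of v c] V_scale[of v c] unfolding F_def fun_scaleR_def
      by (cases "\<rho> v") auto
  qed
  then obtain \<pi> where \<pi>: "Vector_Spaces.linear fun_scaleR fun_scaleR \<pi>"
    and \<pi>_id: "\<And>v. v \<in> F \<Longrightarrow> \<pi> v = v" and \<pi>_F: "\<And>v. \<pi> v \<in> F"
    using linear_projection_onto_subspace by blast
  have \<pi>_add: "\<pi> (\<lambda>x. u x + v x) = (\<lambda>x. \<pi> u x + \<pi> v x)" for u v
    using fun_vsp.linear_add[OF \<pi>, of u v] by (simp add: plus_fun_def)
  have \<pi>_scale: "\<pi> (\<lambda>x. c * v x) = (\<lambda>x. c * \<pi> v x)" for c v
    using fun_vsp.linear_scale[OF \<pi>, of c v] by (simp add: fun_scaleR_def)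
  define p where "p v = real_of_ereal (\<rho> (\<pi> v))" for v
  have \<rho>_\<pi>: "\<rho> (\<pi> v) = ereal (p v)" for v
    using \<pi>_F[of v] nonneg unfolding F_def p_def by (cases "\<rho> (\<pi> v)") auto
  have "seminorm_on V p"
    unfolding seminorm_on_def
  proof (intro conjI ballI allI)
    fix v show "p v \<ge> 0" using \<rho>_\<pi>[of v] nonneg[of "\<pi> v"] \<pi>_F[of v] F_def by simp
  next
    fix v c show "p (\<lambda>x. c * v x) = \<bar>c\<bar> * p v"
      using \<rho>_\<pi>[of v] \<rho>_\<pi>[of "\<lambda>x. c * v x"] scale[of "\<pi> v" c] \<pi>_F[of v]
      by (simp add: \<pi>_scale F_def)
  next
    fix u v show "p (\<lambda>x. u x + v x) \<le> p u + p v"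
      using \<rho>_\<pi>[of u] \<rho>_\<pi>[of v] \<rho>_\<pi>[of "\<lambda>x. u x + v x"] add[of "\<pi> u" "\<pi> v"] \<pi>_F[of u] \<pi>_F[of v]
      by (simp add: \<pi>_add F_def)
  qed
  moreover have finite_eq: "ereal (p v) = \<rho> v" if "v \<in> V" "\<rho> v < \<infinity>" for v
    using \<rho>_\<pi>[of v] \<pi>_id[of v] that unfolding F_def by simp
  moreover have "ereal (p v) \<le> \<rho> v" if "v \<in> V" for v
    using finite_eq[OF that] by (cases "\<rho> v < \<infinity>") (auto simp: not_less)
  ultimately show ?thesis using that by blast
qed

lemma subset_enlarge: "\<delta> > 0 \<Longrightarrow> B \<subseteq> enlarge B \<delta>"
  unfolding enlarge_def by auto

lemma enlarge_nonempty:
  assumes "\<delta> > 0" shows "enlarge B \<delta> \<noteq> {}"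
proof (cases "B = {}")
  case True
  then show ?thesis using assms by (simp add: enlarge_def infdist_def)
next
  case False
  then show ?thesis using subset_enlarge[OF assms, of B] by blast
qed

lemma SUP_enlarge_nonneg:
  assumes "\<delta> > 0" shows "0 \<le> (SUP x\<in>enlarge B \<delta>. ereal \<bar>f x\<bar>)"
proof -
  obtain x where "x \<in> enlarge B \<delta>" using enlarge_nonempty[OF assms] by blast
  then show ?thesis by (rule SUP_upper2) simp
qed

lemma enlarge_mono: "\<delta> \<le> \<delta>' \<Longrightarrow> enlarge B \<delta> \<subseteq> enlarge B \<delta>'"
  unfolding enlarge_def by auto

lemma enlarge_subset_enlarge: "B \<subseteq> B' \<Longrightarrow> B \<noteq> {} \<Longrightarrow> enlarge B \<delta> \<subseteq> enlarge B' \<delta>"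
  unfolding enlarge_def using infdist_mono[of B B'] by (auto intro: le_less_trans)

lemma INF_ereal_mult_left:
  assumes "I \<noteq> {}" and "0 \<le> c"
  shows "(INF i\<in>I. ereal c * f i) = ereal c * (INF i\<in>I. f i)"
proof (cases "c = 0")
  case True
  then show ?thesis using assms(1) by (simp add: zero_ereal_def[symmetric])
next
  case False
  then have "mono ((*) (ereal c))"
    using assms(2) by (simp add: mono_def ereal_mult_left_mono)
  moreover have "bij ((*) (ereal c))"
    by (rule bij_betw_byWitness[of _ "\<lambda>x. ereal (1 / c) * x"])
       (auto simp: mult.assoc[symmetric] False)
  ultimately show ?thesis by (simp add: mono_bij_Inf image_comp)
qed

lemma rho_B_le_rho_sB: "rho_B B f \<le> rho_sB B f"
  unfolding rho_B_def rho_sB_def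
  by (intro INF_greatest SUP_subset_mono subset_enlarge) auto

lemma rho_sB_nonneg: "0 \<le> rho_sB B f"
  unfolding rho_sB_def by (intro INF_greatest SUP_enlarge_nonneg) simp

lemma rho_sB_add: "rho_sB B (\<lambda>x. f x + g x) \<le> rho_sB B f + rho_sB B g"
proof -
  let ?sup = "\<lambda>h \<delta>. SUP x\<in>enlarge B \<delta>. ereal \<bar>h x\<bar>"
  have sup_mono: "?sup h \<delta> \<le> ?sup h \<delta>'" if "\<delta> \<le> \<delta>'" for h \<delta> \<delta>'
    using enlarge_mono[OF that] by (rule SUP_subset_mono) simp
  have "?sup (\<lambda>x. f x + g x) \<delta> \<le> ?sup f \<delta> + ?sup g \<delta>" for \<delta>
    by (intro SUP_least order.trans[OF _ add_mono[OF SUP_upper SUP_upper]]) auto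
  then have "rho_sB B (\<lambda>x. f x + g x) \<le> (INF \<delta>\<in>{0<..}. ?sup f \<delta> + ?sup g \<delta>)"
    unfolding rho_sB_def by (intro INF_mono) auto
  also have "\<dots> = rho_sB B f + rho_sB B g"
    unfolding rho_sB_def
  proof (rule INF_ereal_add_directed)
    fix \<delta> \<delta>' :: real assume "\<delta> \<in> {0<..}" "\<delta>' \<in> {0<..}"
    then show "\<exists>\<delta>''\<in>{0<..}. ?sup f \<delta>'' + ?sup g \<delta>'' \<le> ?sup f \<delta> + ?sup g \<delta>'"
      by (intro bexI[of _ "min \<delta> \<delta>'"] add_mono sup_mono) auto
  qed (auto intro: SUP_enlarge_nonneg)
  finally show ?thesis .
qed

lemma rho_sB_scale: "rho_sB B (\<lambda>x. c * f x) = ereal \<bar>c\<bar> * rho_sB B f"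
proof -
  have "(SUP x\<in>enlarge B \<delta>. ereal \<bar>c * f x\<bar>) = ereal \<bar>c\<bar> * (SUP x\<in>enlarge B \<delta>. ereal \<bar>f x\<bar>)"
    if "\<delta> > 0" for \<delta>
    using SUP_ereal_mult_left[where I = "enlarge B \<delta>" and f = "\<lambda>x. ereal \<bar>f x\<bar>"
        and c = "ereal \<bar>c\<bar>"] enlarge_nonempty[OF that, of B]
    by (simp add: abs_mult)
  then have "rho_sB B (\<lambda>x. c * f x)
      = (INF \<delta>\<in>{0<..}. ereal \<bar>c\<bar> * (SUP x\<in>enlarge B \<delta>. ereal \<bar>f x\<bar>))"
    unfolding rho_sB_def by (intro INF_cong) auto
  also have "\<dots> = ereal \<bar>c\<bar> * rho_sB B f"
    unfolding rho_sB_def by (rule INF_ereal_mult_left) auto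
  finally show ?thesis .
qed

lemma extended_seminorm_rho_sB: "extended_seminorm_on V (rho_sB B)"
  unfolding extended_seminorm_on_def using rho_sB_nonneg rho_sB_scale rho_sB_add by blast

lemma rho_sB_le_rho_B_if_shield:
  assumes shield: "shield A A1" and g: "continuous_on UNIV g"
  shows "rho_sB A g \<le> rho_B A1 g"
proof (rule ereal_le_real)
  fix z assume "rho_B A1 g \<le> ereal z"
  then have bound: "\<forall>x\<in>A1. \<bar>g x\<bar> \<le> z"
    unfolding rho_B_def by (simp add: SUP_le_iff)
  show "rho_sB A g \<le> ereal z"
  proof (rule ereal_le_epsilon2)
    fix e :: real assume "e > 0"
    have "closed {x. z + e \<le> \<bar>g x\<bar>}"
      by (intro closed_Collect_le continuous_intros g)
    moreover have "{x. z + e \<le> \<bar>g x\<bar>} \<inter> A1 = {}"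
      using bound \<open>e > 0\<close> by fastforce
    ultimately obtain \<delta> where "\<delta> > 0" and disjoint: "{x. z + e \<le> \<bar>g x\<bar>} \<inter> enlarge A \<delta> = {}"
      using shield unfolding shield_def by blast
    have "\<bar>g x\<bar> < z + e" if "x \<in> enlarge A \<delta>" for x
      using disjoint that by (metis (no_types, lifting) IntI empty_iff mem_Collect_eq not_le)
    then have "(SUP x\<in>enlarge A \<delta>. ereal \<bar>g x\<bar>) \<le> ereal (z + e)"
      by (intro SUP_least) (simp add: less_imp_le)
    then show "rho_sB A g \<le> ereal z + ereal e"
      unfolding rho_sB_def using \<open>\<delta> > 0\<close> by (auto intro: INF_lower2)
  qed
qed

lemma continuous_separating_function:
  fixes S T :: "'a::metric_space set"
  assumes "closed S" and "closed T" and "S \<inter> T = {}"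
  obtains f :: "'a \<Rightarrow> real" where "continuous_on UNIV f" "\<And>x. f x \<in> {0..1}"
    "\<And>x. x \<in> S \<Longrightarrow> f x = 0" "\<And>x. x \<in> T \<Longrightarrow> f x = 1"
proof -
  have "normal_space (euclidean :: 'a topology)"
    by (simp add: metrizable_imp_normal_space metrizable_space_euclidean)
  then obtain f where "continuous_map euclidean (top_of_set {0..1::real}) f" "f ` S \<subseteq> {0}" "f ` T \<subseteq> {1}"
    using Urysohn_lemma[of euclidean S T 0 1] assms by (auto simp: disjnt_def)
  then show ?thesis
    using that[of f] by (force simp: continuous_map_in_subtopology Pi_iff)
qed

lemma shield_mono:
  assumes "shield A A1" and "A1 \<subseteq> A2"
  shows "shield A A2"
  unfolding shield_def
proof (intro conjI allI impI)
  show "A \<subseteq> A2" using assms unfolding shield_def by blast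
  fix C assume "closed C \<and> C \<inter> A2 = {}"
  then have "closed C \<and> C \<inter> A1 = {}" using assms(2) by blast
  then show "\<exists>\<delta>>0. C \<inter> enlarge A \<delta> = {}" using assms(1) unfolding shield_def by blast
qed

lemma shield_subset:
  assumes "shield B S" and "A \<subseteq> B" and "A \<noteq> {}"
  shows "shield A S"
  unfolding shield_def
proof (intro conjI allI impI)
  show "A \<subseteq> S" using assms(1,2) unfolding shield_def by blast
  fix C assume "closed C \<and> C \<inter> S = {}"
  then obtain \<delta> where "\<delta> > 0" "C \<inter> enlarge B \<delta> = {}"
    using assms(1) unfolding shield_def by blast
  moreover have "enlarge A \<delta> \<subseteq> enlarge B \<delta>"
    using assms(2,3) by (rule enlarge_subset_enlarge)
  ultimately show "\<exists>\<delta>>0. C \<inter> enlarge A \<delta> = {}" by blast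
qed

lemma unshielded_separating_function:
  assumes "\<not> shield A A1" and "A \<subseteq> A1" and "closed A1"
  obtains f :: "'a::metric_space \<Rightarrow> real" where "continuous_on UNIV f" "\<And>x. x \<in> A1 \<Longrightarrow> f x = 0" "rho_sB A f = 1"
proof -
  have "\<not> (\<forall>C. closed C \<and> C \<inter> A1 = {} \<longrightarrow> (\<exists>\<delta>>0. C \<inter> enlarge A \<delta> = {}))"
    using assms(1,2) unfolding shield_def by simp
  then obtain C where "closed C" "A1 \<inter> C = {}" and meets: "\<And>\<delta>. \<delta> > 0 \<Longrightarrow> C \<inter> enlarge A \<delta> \<noteq> {}"
    by (auto simp: Int_commute)
  then obtain f :: "'a \<Rightarrow> real" where f: "continuous_on UNIV f" "\<And>x. f x \<in> {0..1}"
    "\<And>x. x \<in> A1 \<Longrightarrow> f x = 0" "\<And>x. x \<in> C \<Longrightarrow> f x = 1"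
    using continuous_separating_function[OF assms(3)] by blast
  have "rho_sB A f \<le> 1"
    unfolding rho_sB_def using f(2)
    by (intro INF_lower2[of 1] SUP_least) (auto simp: one_ereal_def)
  moreover have "1 \<le> rho_sB A f"
    unfolding rho_sB_def
  proof (rule INF_greatest)
    fix \<delta> :: real assume "\<delta> \<in> {0<..}"
    then obtain x where "x \<in> C" "x \<in> enlarge A \<delta>" using meets by blast
    then show "1 \<le> (SUP x\<in>enlarge A \<delta>. ereal \<bar>f x\<bar>)"
      by (intro SUP_upper2[of x]) (simp_all add: f(4))
  qed
  ultimately show ?thesis using that f(1,3) by simp
qed

lemma bornology_nonempty:
  assumes "bornology \<B>" and "B \<in> \<B>"
  shows "B \<noteq> {}"
proof -
  have "\<forall>B\<in>\<B>. B \<noteq> {}" using assms(1) unfolding bornology_def by (elim conjE)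
  then show ?thesis using assms(2) by blast
qed

lemma bornology_Un:
  assumes "bornology \<B>" and "A \<in> \<B>" and "B \<in> \<B>"
  shows "A \<union> B \<in> \<B>"
proof -
  have "\<forall>A\<in>\<B>. \<forall>B\<in>\<B>. A \<union> B \<in> \<B>" using assms(1) unfolding bornology_def by (elim conjE)
  then show ?thesis using assms(2,3) by blast
qed

lemma bornology_Un_Union:
  assumes "bornology \<B>" and "A \<in> \<B>" and "finite J" and "J \<subseteq> \<B>"
  shows "A \<union> \<Union>J \<in> \<B>"
  using assms(3,4)
proof (induction J rule: finite_induct)
  case (insert B J)
  then have "B \<union> (A \<union> \<Union>J) \<in> \<B>"
    using bornology_Un[OF assms(1)] by simp
  then show ?case by (simp add: Un_left_commute)
qed (simp add: assms(2))

lemma subspace_CX: "fun_vs.subspace CX"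
  unfolding fun_vs.subspace_def CX_def fun_scaleR_def plus_fun_def zero_fun_def
  by (auto intro: continuous_intros)

lemma CX_diff: "u \<in> CX \<Longrightarrow> v \<in> CX \<Longrightarrow> (\<lambda>x. u x - v x) \<in> CX"
  unfolding CX_def by (auto intro: continuous_on_diff)

lemma unshielded_tau_B_nhd_zero:
  assumes "bornology \<B>" and base: "closed_bornology_base \<B> \<B>0"
    and "B \<in> \<B>0" and unshielded: "\<forall>S\<in>\<B>. \<not> shield B S"
    and "openin (tau_B \<B>0) U" and "(\<lambda>x. 0) \<in> U"
  obtains f where "f \<in> U" and "rho_sB B f = 1"
proof -
  obtain J \<epsilon> where J: "finite J" "J \<subseteq> \<B>0" "\<epsilon> > 0"
    and nbhd: "{v\<in>CX. \<forall>i\<in>J. rho_B i (\<lambda>x. v x - 0) < ereal \<epsilon>} \<subseteq> U"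
    using assms(5,6) unfolding tau_B_def openin_seminorm_topology by fastforce
  have "\<B>0 \<subseteq> \<B>" and closed: "\<And>B. B \<in> \<B>0 \<Longrightarrow> closed B"
    using base unfolding closed_bornology_base_def bornology_base_def by blast+
  then have "B \<union> \<Union>J \<in> \<B>"
    using bornology_Un_Union[OF assms(1)] \<open>B \<in> \<B>0\<close> J(1,2) by blast
  then have "\<not> shield B (B \<union> \<Union>J)" using unshielded by blast
  moreover have "closed (B \<union> \<Union>J)"
    using \<open>B \<in> \<B>0\<close> J(1,2) closed by (auto intro!: closed_Union)
  ultimately obtain f where f: "continuous_on UNIV f" "\<And>x. x \<in> B \<union> \<Union>J \<Longrightarrow> f x = 0" "rho_sB B f = 1"
    using unshielded_separating_function[OF _ Un_upper1] by blast
  have "rho_B i (\<lambda>x. f x - 0) < ereal \<epsilon>" if "i \<in> J" for i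
  proof -
    have "rho_B i (\<lambda>x. f x - 0) \<le> 0"
      unfolding rho_B_def using f(2) that by (intro SUP_least) auto
    then show ?thesis using \<open>\<epsilon> > 0\<close> by (simp add: le_less_trans)
  qed
  then have "f \<in> U" using nbhd f(1) unfolding CX_def by blast
  then show ?thesis using that f(3) by blast
qed

lemma unshielded_base_set:
  assumes "bornology \<B>" and "bornology_base \<B> \<B>0" and "\<not> shielded_from_closed_sets \<B>"
  obtains B0 where "B0 \<in> \<B>0" and "\<forall>S\<in>\<B>. \<not> shield B0 S"
proof -
  obtain B where "B \<in> \<B>" "\<forall>S\<in>\<B>. \<not> shield B S"
    using assms(3) unfolding shielded_from_closed_sets_def by blast
  moreover obtain B0 where "B0 \<in> \<B>0" "B \<subseteq> B0"
    using assms(2) \<open>B \<in> \<B>\<close> unfolding bornology_base_def by blast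
  ultimately have "\<forall>S\<in>\<B>. \<not> shield B0 S"
    using shield_subset bornology_nonempty[OF assms(1)] by blast
  with \<open>B0 \<in> \<B>0\<close> show ?thesis using that by blast
qed

lemma unshielded_lc_topology:
  assumes "bornology \<B>" and "closed_bornology_base \<B> \<B>0"
    and "B \<in> \<B>0" and "\<forall>S\<in>\<B>. \<not> shield B S"
  obtains \<sigma> where "locally_convex_topology CX \<sigma>" "coarser \<sigma> (tau_sB \<B>0)" "\<not> coarser \<sigma> (tau_B \<B>0)"
proof -
  obtain p where p: "seminorm_on CX p" and p_le: "\<And>v. v \<in> CX \<Longrightarrow> ereal (p v) \<le> rho_sB B v"
    and p_eq: "\<And>v. v \<in> CX \<Longrightarrow> rho_sB B v < \<infinity> \<Longrightarrow> ereal (p v) = rho_sB B v"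
    using finite_part_seminorm[OF subspace_CX extended_seminorm_rho_sB] by blast
  define \<sigma> where "\<sigma> = seminorm_topology CX (\<lambda>p v. ereal (p v)) {p}"
  have "locally_convex_topology CX \<sigma>"
    unfolding locally_convex_topology_def \<sigma>_def using p by blast
  moreover have "coarser \<sigma> (tau_sB \<B>0)"
    unfolding \<sigma>_def tau_sB_def using \<open>B \<in> \<B>0\<close>
    by (intro coarser_seminorm_topology) (auto intro: p_le CX_diff)
  moreover have "\<not> coarser \<sigma> (tau_B \<B>0)"
  proof
    let ?ball = "{v\<in>CX. ereal (p v) < ereal 1}"
    have scale: "\<forall>v\<in>CX. \<forall>c. p (\<lambda>x. c * v x) = \<bar>c\<bar> * p v"
      and add: "\<forall>u\<in>CX. \<forall>v\<in>CX. p (\<lambda>x. u x + v x) \<le> p u + p v"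
      using p unfolding seminorm_on_def by simp_all
    have "p u \<le> p (\<lambda>x. u x - v x) + p v" if "u \<in> CX" "v \<in> CX" for u v
      using add CX_diff[OF that] that(2) by fastforce
    then have "openin \<sigma> ?ball"
      unfolding \<sigma>_def by (intro openin_seminorm_ball) auto
    moreover assume "coarser \<sigma> (tau_B \<B>0)"
    ultimately have ball_open: "openin (tau_B \<B>0) ?ball" unfolding coarser_def by blast
    have "(\<lambda>x. 0) \<in> CX" unfolding CX_def by simp
    moreover have "p (\<lambda>x. 0 * 0) = \<bar>0\<bar> * p (\<lambda>x. 0)"
      by (rule spec[OF bspec[OF scale calculation]])
    ultimately have "(\<lambda>x. 0) \<in> ?ball" by simp
    with ball_open obtain f where "f \<in> ?ball" "rho_sB B f = 1"
      using unshielded_tau_B_nhd_zero[OF assms] by blast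
    then show False using p_eq[of f] by simp
  qed
  ultimately show ?thesis using that by blast
qed

lemma tau_B_eq_tau_sB_if_shielded:
  assumes base: "closed_bornology_base \<B> \<B>0" and shielded: "shielded_from_closed_sets \<B>"
  shows "tau_B \<B>0 = tau_sB \<B>0"
proof (rule coarser_antisym)
  show "coarser (tau_B \<B>0) (tau_sB \<B>0)"
    unfolding tau_B_def tau_sB_def by (intro coarser_seminorm_topology) (auto intro: rho_B_le_rho_sB)
  have "\<exists>S\<in>\<B>0. \<forall>u\<in>CX. \<forall>v\<in>CX. rho_sB B (\<lambda>x. u x - v x) \<le> rho_B S (\<lambda>x. u x - v x)"
    if "B \<in> \<B>0" for B
  proof -
    have "\<B>0 \<subseteq> \<B>" and cofinal: "\<forall>A\<in>\<B>. \<exists>S\<in>\<B>0. A \<subseteq> S"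
      using base unfolding closed_bornology_base_def bornology_base_def by simp_all
    with that have "B \<in> \<B>" by blast
    then obtain A1 where "A1 \<in> \<B>" "shield B A1"
      using shielded unfolding shielded_from_closed_sets_def by blast
    moreover obtain S where "S \<in> \<B>0" "A1 \<subseteq> S"
      using cofinal \<open>A1 \<in> \<B>\<close> by blast
    ultimately have "shield B S" by (blast intro: shield_mono)
    then have le: "rho_sB B g \<le> rho_B S g" if "g \<in> CX" for g
      using rho_sB_le_rho_B_if_shield that unfolding CX_def by simp
    show ?thesis using \<open>S \<in> \<B>0\<close> by (intro bexI[of _ S] ballI le CX_diff)
  qed
  then show "coarser (tau_sB \<B>0) (tau_B \<B>0)"
    unfolding tau_B_def tau_sB_def by (rule coarser_seminorm_topology)
qed

theorem theorem3p15:
  fixes \<B> \<B>0 :: "'a::metric_space set set"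
    and TF TFs :: "('a \<Rightarrow> real) topology"
  assumes "bornology \<B>"
    and "closed_bornology_base \<B> \<B>0"
    and "finest_lc_topology CX (tau_B \<B>0) TF"
    and "finest_lc_topology CX (tau_sB \<B>0) TFs"
  shows "(TF = TFs \<longleftrightarrow> tau_B \<B>0 = tau_sB \<B>0)
    \<and> (tau_B \<B>0 = tau_sB \<B>0 \<longleftrightarrow> shielded_from_closed_sets \<B>)"
proof -
  have ii_i: "TF = TFs" if "tau_B \<B>0 = tau_sB \<B>0"
    using finest_lc_topology_unique assms(3,4) that by simp
  have i_iii: "shielded_from_closed_sets \<B>" if "TF = TFs"
  proof (rule ccontr)
    assume "\<not> shielded_from_closed_sets \<B>"
    moreover have "bornology_base \<B> \<B>0"
      using assms(2) unfolding closed_bornology_base_def by blast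
    ultimately obtain B0 where "B0 \<in> \<B>0" "\<forall>S\<in>\<B>. \<not> shield B0 S"
      using unshielded_base_set[OF assms(1)] by blast
    then obtain \<sigma> where "locally_convex_topology CX \<sigma>" "coarser \<sigma> (tau_sB \<B>0)" "\<not> coarser \<sigma> (tau_B \<B>0)"
      using unshielded_lc_topology[OF assms(1,2)] by blast
    with assms(3,4) \<open>TF = TFs\<close> show False
      unfolding finest_lc_topology_def coarser_def by blast
  qed
  show ?thesis
    using ii_i i_iii tau_B_eq_tau_sB_if_shielded[OF assms(2)] by blast
qed

end
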